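(* For every $n\ge2$ and $s\in(0,1/2)$ there exists $g_s:[0,1]\to[0,1]$ such that: (i) $g_s|_{\mathcal{X}_n}\in\mathcal{G}_n^{(1)}$, i.e. the angle map of $g_s|_{\mathcal{X}_n}$ is a multilinear polynomial of degree at most $1$ in $b\in\{0,1\}^n$; (ii) $g_s\in W^{s',2}(0,1)$ for all $s'<s$, but $g_s\notin W^{s,2}(0,1)$.
   Context: $\mathcal{X}_n=\{x_i=i/2^n: i=0,\dots,2^n-1\}$; for $b\in\{0,1\}^n$, $i(b)=\sum_kb_k2^k$. The angle map of $h:\mathcal{X}_n\to[0,1]$ is $\Theta_h(b)=2\arcsin\sqrt{h(x_{i(b)})}$. Every function on $\{0,1\}^n$ has a unique expansion $\sum_{S\subseteq\{0,\dots,n-1\}}c_S\prod_{j\in S}b_j$, with degree $\max\{|S|:c_S\ne0\}$; $\mathcal{G}_n^{(d)}$ is the set of $h:\mathcal{X}_n\to[0,1]$ whose angle map has degree $\le d$. For $s\in(0,1)$, $W^{s,2}(0,1)$ is the fractional Sobolev space of $u\in L^2(0,1)$ with finite Aronszajn–Slobodeckij seminorm $|u|_{W^{s,2}}^2=\int_0^1\int_0^1\frac{|u(x)-u(y)|^2}{|x-y|^{1+2s}}dx\,dy$. *)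

theory Defs
  imports "HOL-Analysis.Analysis"
begin

text \<open>Bit vectors b in {0,1}^n, represented extensionally as functions nat => nat
  with values in {0,1} below n and 0 from n on.\<close>
definition cube :: "nat \<Rightarrow> (nat \<Rightarrow> nat) set" where
  "cube n = {b. (\<forall>k<n. b k \<in> {0,1}) \<and> (\<forall>k\<ge>n. b k = 0)}"

definition bidx :: "nat \<Rightarrow> (nat \<Rightarrow> nat) \<Rightarrow> nat" where
  "bidx n b = (\<Sum>k<n. b k * 2 ^ k)"

definition angle_map :: "nat \<Rightarrow> (real \<Rightarrow> real) \<Rightarrow> (nat \<Rightarrow> nat) \<Rightarrow> real" where
  "angle_map n h b = 2 * arcsin (sqrt (h (real (bidx n b) / 2 ^ n)))"

definition mdeg_le :: "nat \<Rightarrow> nat \<Rightarrow> ((nat \<Rightarrow> nat) \<Rightarrow> real) \<Rightarrow> bool" where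
  "mdeg_le n d f \<longleftrightarrow> (\<exists>c :: nat set \<Rightarrow> real.
      (\<forall>S. S \<subseteq> {..<n} \<and> card S > d \<longrightarrow> c S = 0) \<and>
      (\<forall>b\<in>cube n. f b = (\<Sum>S\<in>Pow {..<n}. c S * (\<Prod>j\<in>S. real (b j)))))"

definition G_class :: "nat \<Rightarrow> nat \<Rightarrow> (real \<Rightarrow> real) \<Rightarrow> bool" where
  "G_class n d h \<longleftrightarrow> (\<forall>i<(2::nat)^n. h (real i / 2 ^ n) \<in> {0..1}) \<and> mdeg_le n d (angle_map n h)"

definition in_Wsp :: "real \<Rightarrow> (real \<Rightarrow> real) \<Rightarrow> bool" where
  "in_Wsp s u \<longleftrightarrow>
     set_borel_measurable lebesgue {0<..<1} u \<and>
     set_integrable lebesgue {0<..<1} (\<lambda>x. (u x)\<^sup>2) \<and>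
     (\<integral>\<^sup>+ x. \<integral>\<^sup>+ y. indicator ({0<..<1} \<times> {0<..<1}) (x, y) *
         ennreal ((u x - u y)\<^sup>2 / \<bar>x - y\<bar> powr (1 + 2 * s)) \<partial>lebesgue \<partial>lebesgue) < \<infinity>"

end

theory Submission
  imports Defs
begin

text \<open>The function is the indicator of an open set E made of disjoint intervals of lengths
  l_j, each followed by a gap of the same length, all packed into (0, 2^-n). It vanishes on
  the grid X_n, so its angle map is identically zero. For an indicator, the Gagliardo energy
  only sees pairs (x, y) on opposite sides of the boundary of E: pairs with x in the j-th
  interval and y outside it contribute at most C_s l_j^(1-2s), pairs with x in the j-th
  interval and y in the adjacent gap at least c_s l_j^(1-2s). Hence the indicator lies in
  W^{s,2} iff the series of the l_j^(1-2s) converges, and l_j proportional to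
  (j+1)^(-1/(1-2s)) makes it converge exactly for the exponents below s.\<close>

lemma nn_integral_powr_atLeast:
  fixes d e :: real
  assumes "0 < d" "e < -1"
  shows "(\<integral>\<^sup>+ t. ennreal (t powr e) * indicator {d..} t \<partial>lborel)
    = ennreal (- (d powr (e + 1)) / (e + 1))"
  by (rule nn_integral_has_integral_lebesgue'[OF _ has_integral_powr_to_inf[OF assms(2,1)]]) simp

lemma nn_integral_powr_0_atMost:
  fixes l e :: real
  assumes "0 \<le> l" "-1 < e"
  shows "(\<integral>\<^sup>+ t. ennreal (t powr e) * indicator {0..l} t \<partial>lborel)
    = ennreal (l powr (e + 1) / (e + 1))"
  by (rule nn_integral_has_integral_lebesgue'[OF _ has_integral_powr_from_0[OF assms(2,1)]]) simp

lemma nn_integral_dist_powr_atLeast: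
  fixes x b e :: real
  assumes "x < b" "e < -1"
  shows "(\<integral>\<^sup>+ y. ennreal (\<bar>x - y\<bar> powr e) * indicator {b..} y \<partial>lborel)
    = ennreal (- ((b - x) powr (e + 1)) / (e + 1))"
proof -
  let ?f = "\<lambda>y. ennreal (\<bar>x - y\<bar> powr e) * indicator {b..} y"
  have "integral\<^sup>N lborel ?f = (\<integral>\<^sup>+ t. ?f (x + 1 * t) \<partial>lborel)"
    using nn_integral_real_affine[of ?f 1 x] by simp
  also have "\<dots> = (\<integral>\<^sup>+ t. ennreal (t powr e) * indicator {b - x..} t \<partial>lborel)"
    using assms by (intro nn_integral_cong) (auto simp: indicator_def)
  finally show ?thesis
    using assms by (simp add: nn_integral_powr_atLeast)
qed

lemma nn_integral_dist_powr_atMost: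
  fixes x a e :: real
  assumes "a < x" "e < -1"
  shows "(\<integral>\<^sup>+ y. ennreal (\<bar>x - y\<bar> powr e) * indicator {..a} y \<partial>lborel)
    = ennreal (- ((x - a) powr (e + 1)) / (e + 1))"
proof -
  let ?f = "\<lambda>y. ennreal (\<bar>x - y\<bar> powr e) * indicator {..a} y"
  have "integral\<^sup>N lborel ?f = (\<integral>\<^sup>+ t. ?f (x + (-1) * t) \<partial>lborel)"
    using nn_integral_real_affine[of ?f "-1" x] by simp
  also have "\<dots> = (\<integral>\<^sup>+ t. ennreal (t powr e) * indicator {x - a..} t \<partial>lborel)"
    using assms by (intro nn_integral_cong) (auto simp: indicator_def)
  finally show ?thesis
    using assms by (simp add: nn_integral_powr_atLeast)
qed

lemma nn_integral_powr_diff_left_endpoint: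
  fixes a l e :: real
  assumes "0 \<le> l" "-1 < e"
  shows "(\<integral>\<^sup>+ x. ennreal ((x - a) powr e) * indicator {a..a + l} x \<partial>lborel)
    = ennreal (l powr (e + 1) / (e + 1))"
proof -
  let ?f = "\<lambda>x. ennreal ((x - a) powr e) * indicator {a..a + l} x"
  have "integral\<^sup>N lborel ?f = (\<integral>\<^sup>+ t. ?f (a + 1 * t) \<partial>lborel)"
    using nn_integral_real_affine[of ?f 1 a] by simp
  also have "\<dots> = (\<integral>\<^sup>+ t. ennreal (t powr e) * indicator {0..l} t \<partial>lborel)"
    by (intro nn_integral_cong) (auto simp: indicator_def)
  finally show ?thesis
    using assms by (simp add: nn_integral_powr_0_atMost)
qed

lemma nn_integral_powr_diff_right_endpoint:
  fixes a l e :: real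
  assumes "0 \<le> l" "-1 < e"
  shows "(\<integral>\<^sup>+ x. ennreal ((a + l - x) powr e) * indicator {a..a + l} x \<partial>lborel)
    = ennreal (l powr (e + 1) / (e + 1))"
proof -
  let ?f = "\<lambda>x. ennreal ((a + l - x) powr e) * indicator {a..a + l} x"
  have "integral\<^sup>N lborel ?f = (\<integral>\<^sup>+ t. ?f (a + l + (-1) * t) \<partial>lborel)"
    using nn_integral_real_affine[of ?f "-1" "a + l"] by simp
  also have "\<dots> = (\<integral>\<^sup>+ t. ennreal (t powr e) * indicator {0..l} t \<partial>lborel)"
    by (intro nn_integral_cong) (auto simp: indicator_def)
  finally show ?thesis
    using assms by (simp add: nn_integral_powr_0_atMost)
qed

abbreviation gagliardo_kernel :: "real \<Rightarrow> real \<Rightarrow> real \<Rightarrow> ennreal" where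
  "gagliardo_kernel s x y \<equiv> ennreal (\<bar>x - y\<bar> powr (-(1 + 2 * s)))"

lemma nn_integral_gagliardo_kernel_outside_interval_le:
  fixes a l x s :: real
  assumes "a < x" "x < a + l" "0 < s"
  shows "(\<integral>\<^sup>+ y. indicator (- {a<..<a + l}) y * gagliardo_kernel s x y \<partial>lborel)
    \<le> ennreal (1 / (2 * s)) * ennreal ((x - a) powr (-2 * s))
      + ennreal (1 / (2 * s)) * ennreal ((a + l - x) powr (-2 * s))"
proof -
  have "(\<integral>\<^sup>+ y. indicator (- {a<..<a + l}) y * gagliardo_kernel s x y \<partial>lborel)
      \<le> (\<integral>\<^sup>+ y. gagliardo_kernel s x y * indicator {..a} y
          + gagliardo_kernel s x y * indicator {a + l..} y \<partial>lborel)"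
    by (intro nn_integral_mono) (auto simp: indicator_def)
  also have "\<dots> = (\<integral>\<^sup>+ y. gagliardo_kernel s x y * indicator {..a} y \<partial>lborel)
      + (\<integral>\<^sup>+ y. gagliardo_kernel s x y * indicator {a + l..} y \<partial>lborel)"
    by (intro nn_integral_add) auto
  also have "\<dots> = ennreal (1 / (2 * s)) * ennreal ((x - a) powr (-2 * s))
      + ennreal (1 / (2 * s)) * ennreal ((a + l - x) powr (-2 * s))"
    using assms
    by (simp add: nn_integral_dist_powr_atMost nn_integral_dist_powr_atLeast
        ennreal_mult[symmetric] divide_simps)
  finally show ?thesis .
qed

lemma interval_escape_integral_le:
  fixes a l s :: real
  assumes "0 < l" "0 < s" "s < 1/2"
  shows "(\<integral>\<^sup>+ x. \<integral>\<^sup>+ y. indicator {a<..<a + l} x * indicator (- {a<..<a + l}) y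
      * gagliardo_kernel s x y \<partial>lborel \<partial>lborel)
    \<le> ennreal (l powr (1 - 2 * s) / (s * (1 - 2 * s)))"
proof -
  let ?c = "ennreal (1 / (2 * s))" and ?I = "indicator {a..a + l} :: real \<Rightarrow> ennreal"
  have "(\<integral>\<^sup>+ x. \<integral>\<^sup>+ y. indicator {a<..<a + l} x * indicator (- {a<..<a + l}) y
        * gagliardo_kernel s x y \<partial>lborel \<partial>lborel)
      \<le> (\<integral>\<^sup>+ x. ?c * (ennreal ((x - a) powr (-2 * s)) * ?I x)
          + ?c * (ennreal ((a + l - x) powr (-2 * s)) * ?I x) \<partial>lborel)"
  proof (intro nn_integral_mono)
    fix x :: real
    show "(\<integral>\<^sup>+ y. indicator {a<..<a + l} x * indicator (- {a<..<a + l}) y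
          * gagliardo_kernel s x y \<partial>lborel)
        \<le> ?c * (ennreal ((x - a) powr (-2 * s)) * ?I x)
          + ?c * (ennreal ((a + l - x) powr (-2 * s)) * ?I x)"
      using nn_integral_gagliardo_kernel_outside_interval_le[of a x l s] assms
      by (cases "x \<in> {a<..<a + l}") (simp_all add: mult.assoc)
  qed
  also have "\<dots> = ?c * ennreal (l powr (-2 * s + 1) / (-2 * s + 1))
      + ?c * ennreal (l powr (-2 * s + 1) / (-2 * s + 1))"
    using assms by (simp add: nn_integral_add nn_integral_cmult
        nn_integral_powr_diff_left_endpoint nn_integral_powr_diff_right_endpoint)
  also have "\<dots> = ennreal (l powr (1 - 2 * s) / (s * (1 - 2 * s)))"
    using assms
    by (simp add: ennreal_mult[symmetric] ennreal_plus[symmetric] divide_simps del: ennreal_plus)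
  finally show ?thesis .
qed

lemma adjacent_intervals_integral_ge:
  fixes a l s :: real
  assumes "0 < l" "0 < s"
  shows "ennreal (2 powr (-(1 + 2 * s)) * l powr (1 - 2 * s))
    \<le> (\<integral>\<^sup>+ x. \<integral>\<^sup>+ y. indicator {a<..<a + l} x * indicator {a + l<..<a + 2 * l} y
        * gagliardo_kernel s x y \<partial>lborel \<partial>lborel)"
proof -
  let ?C = "ennreal ((2 * l) powr (-(1 + 2 * s)))"
  have "2 powr (-(1 + 2 * s)) * l powr (1 - 2 * s)
      = 2 powr (-(1 + 2 * s)) * (l powr (-(1 + 2 * s)) * l powr 2)"
    by (simp add: powr_add[symmetric])
  also have "\<dots> = (2 * l) powr (-(1 + 2 * s)) * l * l"
    using assms by (simp add: powr_mult powr_numeral power2_eq_square)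
  finally have "ennreal (2 powr (-(1 + 2 * s)) * l powr (1 - 2 * s)) = ?C * ennreal l * ennreal l"
    using assms by (simp add: ennreal_mult)
  also have "\<dots> = (\<integral>\<^sup>+ x. \<integral>\<^sup>+ y. ?C * indicator {a<..<a + l} x * indicator {a + l<..<a + 2 * l} y
      \<partial>lborel \<partial>lborel)"
    using assms by (simp add: nn_integral_cmult nn_integral_multc mult.assoc)
  also have "\<dots> \<le> (\<integral>\<^sup>+ x. \<integral>\<^sup>+ y. indicator {a<..<a + l} x * indicator {a + l<..<a + 2 * l} y
      * gagliardo_kernel s x y \<partial>lborel \<partial>lborel)"
  proof (intro nn_integral_mono)
    fix x y :: real
    show "?C * indicator {a<..<a + l} x * indicator {a + l<..<a + 2 * l} y
      \<le> indicator {a<..<a + l} x * indicator {a + l<..<a + 2 * l} y * gagliardo_kernel s x y"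
    proof (cases "x \<in> {a<..<a + l} \<and> y \<in> {a + l<..<a + 2 * l}")
      case True
      then have "(2 * l) powr (-(1 + 2 * s)) \<le> \<bar>x - y\<bar> powr (-(1 + 2 * s))"
        using assms(2) by (intro powr_mono2') auto
      then show ?thesis
        using True by (simp add: ennreal_leI)
    qed auto
  qed
  finally show ?thesis .
qed

definition gagliardo_energy :: "real \<Rightarrow> (real \<Rightarrow> real) \<Rightarrow> ennreal" where
  "gagliardo_energy s u = (\<integral>\<^sup>+ x. \<integral>\<^sup>+ y. indicator ({0<..<1} \<times> {0<..<1}) (x, y) *
      ennreal ((u x - u y)\<^sup>2 / \<bar>x - y\<bar> powr (1 + 2 * s)) \<partial>lebesgue \<partial>lebesgue)"

lemma in_Wsp_indicator_open_iff:
  fixes E :: "real set"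
  assumes "open E"
  shows "in_Wsp s (indicator E) \<longleftrightarrow> gagliardo_energy s (indicator E) < \<infinity>"
proof -
  have [measurable]: "E \<in> sets borel"
    using assms by auto
  have "set_borel_measurable lebesgue {0<..<1} (indicator E :: real \<Rightarrow> real)"
    unfolding set_borel_measurable_def by (intro measurable_completion) measurable
  moreover have "set_integrable lebesgue {0<..<1} (\<lambda>x. (indicator E x :: real)\<^sup>2)"
  proof -
    have "{0<..<1} \<inter> E \<in> lmeasurable"
      using assms by (intro lmeasurable_open) auto
    moreover have "(\<lambda>x. indicator {0<..<1} x *\<^sub>R (indicator E x :: real)\<^sup>2)
        = indicator ({0<..<1} \<inter> E)"
      by (auto simp: indicator_def)
    ultimately show ?thesis
      unfolding set_integrable_def by (simp add: lmeasurable_iff_integrable)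
  qed
  ultimately show ?thesis
    by (simp add: in_Wsp_def gagliardo_energy_def)
qed

lemma gagliardo_energy_indicator_lborel:
  fixes E :: "real set"
  assumes [measurable]: "E \<in> sets borel"
  shows "gagliardo_energy s (indicator E)
    = (\<integral>\<^sup>+ x. \<integral>\<^sup>+ y. indicator ({0<..<1} \<times> {0<..<1}) (x, y) *
        ennreal (((indicator E x :: real) - indicator E y)\<^sup>2 / \<bar>x - y\<bar> powr (1 + 2 * s))
        \<partial>lborel \<partial>lborel)"
  unfolding gagliardo_energy_def by (simp only: nn_integral_completion)

lemma gagliardo_energy_indicator_le_escape_integral:
  fixes E :: "real set"
  assumes [measurable]: "E \<in> sets borel"
  shows "gagliardo_energy s (indicator E)
    \<le> 2 * (\<integral>\<^sup>+ x. \<integral>\<^sup>+ y. indicator E x * indicator (- E) y * gagliardo_kernel s x y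
        \<partial>lborel \<partial>lborel)"
proof -
  define H where "H x y = indicator E x * indicator (- E) y * gagliardo_kernel s x y"
    for x y :: real
  have [measurable]: "(\<lambda>(x, y). H x y) \<in> borel_measurable (lborel \<Otimes>\<^sub>M lborel)"
    unfolding H_def by measurable
  have "gagliardo_energy s (indicator E) \<le> (\<integral>\<^sup>+ x. \<integral>\<^sup>+ y. H x y + H y x \<partial>lborel \<partial>lborel)"
    unfolding gagliardo_energy_indicator_lborel[OF assms] H_def
  proof (intro nn_integral_mono)
    fix x y :: real
    have "1 / \<bar>x - y\<bar> powr (1 + 2 * s) = \<bar>x - y\<bar> powr (-(1 + 2 * s))"
      by (rule powr_minus_divide[symmetric])
    then show "indicator ({0<..<1} \<times> {0<..<1}) (x, y) *
        ennreal (((indicator E x :: real) - indicator E y)\<^sup>2 / \<bar>x - y\<bar> powr (1 + 2 * s))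
      \<le> indicator E x * indicator (- E) y * gagliardo_kernel s x y
        + indicator E y * indicator (- E) x * gagliardo_kernel s y x"
      by (auto simp: indicator_def abs_minus_commute)
  qed
  also have "\<dots> = (\<integral>\<^sup>+ x. (\<integral>\<^sup>+ y. H x y \<partial>lborel) + (\<integral>\<^sup>+ y. H y x \<partial>lborel) \<partial>lborel)"
    by (intro nn_integral_cong nn_integral_add) measurable
  also have "\<dots> = (\<integral>\<^sup>+ x. \<integral>\<^sup>+ y. H x y \<partial>lborel \<partial>lborel)
      + (\<integral>\<^sup>+ x. \<integral>\<^sup>+ y. H y x \<partial>lborel \<partial>lborel)"
    by (intro nn_integral_add) measurable
  also have "(\<integral>\<^sup>+ x. \<integral>\<^sup>+ y. H y x \<partial>lborel \<partial>lborel) = (\<integral>\<^sup>+ x. \<integral>\<^sup>+ y. H x y \<partial>lborel \<partial>lborel)"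
    by (rule lborel_pair.Fubini') measurable
  finally show ?thesis
    unfolding H_def mult_2[where 'a = ennreal] .
qed

lemma escape_integral_Union_le:
  fixes a l :: "nat \<Rightarrow> real" and s :: real
  assumes l: "\<And>j. 0 < l j" and s: "0 < s" "s < 1/2"
  defines "E \<equiv> \<Union>j. {a j<..<a j + l j}"
  shows "(\<integral>\<^sup>+ x. \<integral>\<^sup>+ y. indicator E x * indicator (- E) y * gagliardo_kernel s x y
      \<partial>lborel \<partial>lborel)
    \<le> (\<Sum>j. ennreal (l j powr (1 - 2 * s) / (s * (1 - 2 * s))))"
proof -
  define T where "T j x y = indicator {a j<..<a j + l j} x * indicator (- {a j<..<a j + l j}) y
      * gagliardo_kernel s x y" for j and x y :: real
  have [measurable]: "(\<lambda>(x, y). T j x y) \<in> borel_measurable (lborel \<Otimes>\<^sub>M lborel)" for j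
    unfolding T_def by measurable
  have "(\<integral>\<^sup>+ x. \<integral>\<^sup>+ y. indicator E x * indicator (- E) y * gagliardo_kernel s x y
        \<partial>lborel \<partial>lborel)
      \<le> (\<integral>\<^sup>+ x. \<integral>\<^sup>+ y. (\<Sum>j. T j x y) \<partial>lborel \<partial>lborel)"
  proof (intro nn_integral_mono)
    fix x y :: real
    show "indicator E x * indicator (- E) y * gagliardo_kernel s x y \<le> (\<Sum>j. T j x y)"
    proof (cases "x \<in> E \<and> y \<notin> E")
      case True
      then obtain j where "x \<in> {a j<..<a j + l j}" "y \<notin> {a j<..<a j + l j}"
        by (auto simp: E_def)
      then have "indicator E x * indicator (- E) y * gagliardo_kernel s x y = T j x y"
        using True by (simp add: T_def)
      then show ?thesis
        using sum_le_suminf[of "\<lambda>j. T j x y" "{j}"] by simp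
    qed auto
  qed
  also have "\<dots> = (\<integral>\<^sup>+ x. (\<Sum>j. \<integral>\<^sup>+ y. T j x y \<partial>lborel) \<partial>lborel)"
    by (intro nn_integral_cong nn_integral_suminf) measurable
  also have "\<dots> = (\<Sum>j. \<integral>\<^sup>+ x. \<integral>\<^sup>+ y. T j x y \<partial>lborel \<partial>lborel)"
    by (intro nn_integral_suminf) measurable
  also have "\<dots> \<le> (\<Sum>j. ennreal (l j powr (1 - 2 * s) / (s * (1 - 2 * s))))"
    unfolding T_def using l s by (intro suminf_le summableI interval_escape_integral_le) auto
  finally show ?thesis .
qed

lemma gagliardo_energy_indicator_Union_le:
  fixes a l :: "nat \<Rightarrow> real" and s :: real
  assumes l: "\<And>j. 0 < l j" and s: "0 < s" "s < 1/2"
  shows "gagliardo_energy s (indicator (\<Union>j. {a j<..<a j + l j}))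
    \<le> 2 * (\<Sum>j. ennreal (l j powr (1 - 2 * s) / (s * (1 - 2 * s))))"
proof -
  let ?E = "\<Union>j. {a j<..<a j + l j}"
  have "gagliardo_energy s (indicator ?E)
      \<le> 2 * (\<integral>\<^sup>+ x. \<integral>\<^sup>+ y. indicator ?E x * indicator (- ?E) y * gagliardo_kernel s x y
          \<partial>lborel \<partial>lborel)"
    by (rule gagliardo_energy_indicator_le_escape_integral) auto
  also have "\<dots> \<le> 2 * (\<Sum>j. ennreal (l j powr (1 - 2 * s) / (s * (1 - 2 * s))))"
    by (intro mult_left_mono escape_integral_Union_le[of l s a, OF l s]) simp
  finally show ?thesis .
qed

lemma escape_integral_le_gagliardo_energy_indicator:
  fixes E :: "real set"
  assumes "E \<in> sets borel"
  shows "(\<integral>\<^sup>+ x. \<integral>\<^sup>+ y. indicator (E \<inter> {0<..<1}) x * indicator ({0<..<1} - E) y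
      * gagliardo_kernel s x y \<partial>lborel \<partial>lborel)
    \<le> gagliardo_energy s (indicator E)"
  unfolding gagliardo_energy_indicator_lborel[OF assms]
proof (intro nn_integral_mono)
  fix x y :: real
  have "\<bar>x - y\<bar> powr (-(1 + 2 * s)) = 1 / \<bar>x - y\<bar> powr (1 + 2 * s)"
    by (rule powr_minus_divide)
  then show "indicator (E \<inter> {0<..<1}) x * indicator ({0<..<1} - E) y * gagliardo_kernel s x y
    \<le> indicator ({0<..<1} \<times> {0<..<1}) (x, y) *
      ennreal (((indicator E x :: real) - indicator E y)\<^sup>2 / \<bar>x - y\<bar> powr (1 + 2 * s))"
    by (auto simp: indicator_def)
qed

lemma suminf_indicator_mult_le:
  fixes A B :: "nat \<Rightarrow> 'a set" and c :: ennreal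
  assumes "disjoint_family A" "\<And>j. A j \<subseteq> C" "\<And>j. B j \<subseteq> D"
  shows "(\<Sum>j. indicator (A j) x * indicator (B j) y * c) \<le> indicator C x * indicator D y * c"
proof (cases "\<exists>j. x \<in> A j")
  case True
  then obtain j where j: "x \<in> A j"
    by blast
  have "indicator (A i) x = (0 :: ennreal)" if "i \<noteq> j" for i
    using disjoint_family_onD[OF assms(1), of i j] that j by (auto simp: indicator_def)
  then have "(\<Sum>i. indicator (A i) x * indicator (B i) y * c) = indicator (A j) x * indicator (B j) y * c"
    by (subst suminf_finite[of "{j}"]) auto
  also have "\<dots> \<le> indicator C x * indicator D y * c"
    using assms(2,3)[of j] by (intro mult_right_mono mult_mono) (auto simp: indicator_def)
  finally show ?thesis .
qed simp

lemma gagliardo_energy_indicator_ge: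
  fixes E :: "real set" and a l :: "nat \<Rightarrow> real" and s :: real
  assumes [measurable]: "E \<in> sets borel" and l: "\<And>j. 0 < l j" and s: "0 < s"
    and disj: "disjoint_family (\<lambda>j. {a j<..<a j + l j})"
    and inside: "\<And>j. {a j<..<a j + l j} \<subseteq> E"
    and outside: "\<And>j. E \<inter> {a j + l j<..<a j + 2 * l j} = {}"
    and range: "\<And>j. {a j<..<a j + 2 * l j} \<subseteq> {0<..<1}"
  shows "(\<Sum>j. ennreal (2 powr (-(1 + 2 * s)) * l j powr (1 - 2 * s)))
    \<le> gagliardo_energy s (indicator E)"
proof -
  define L where "L j x y = indicator {a j<..<a j + l j} x * indicator {a j + l j<..<a j + 2 * l j} y
      * gagliardo_kernel s x y" for j and x y :: real
  have [measurable]: "(\<lambda>(x, y). L j x y) \<in> borel_measurable (lborel \<Otimes>\<^sub>M lborel)" for j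
    unfolding L_def by measurable
  have "(\<Sum>j. ennreal (2 powr (-(1 + 2 * s)) * l j powr (1 - 2 * s)))
      \<le> (\<Sum>j. \<integral>\<^sup>+ x. \<integral>\<^sup>+ y. L j x y \<partial>lborel \<partial>lborel)"
    unfolding L_def using l s by (intro suminf_le summableI adjacent_intervals_integral_ge) auto
  also have "\<dots> = (\<integral>\<^sup>+ x. (\<Sum>j. \<integral>\<^sup>+ y. L j x y \<partial>lborel) \<partial>lborel)"
    by (intro nn_integral_suminf[symmetric]) measurable
  also have "\<dots> = (\<integral>\<^sup>+ x. \<integral>\<^sup>+ y. (\<Sum>j. L j x y) \<partial>lborel \<partial>lborel)"
    by (intro nn_integral_cong nn_integral_suminf[symmetric]) measurable
  also have "\<dots> \<le> (\<integral>\<^sup>+ x. \<integral>\<^sup>+ y. indicator (E \<inter> {0<..<1}) x * indicator ({0<..<1} - E) y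
      * gagliardo_kernel s x y \<partial>lborel \<partial>lborel)"
  proof (intro nn_integral_mono)
    fix x y :: real
    have "{a j<..<a j + l j} \<subseteq> E \<inter> {0<..<1}" "{a j + l j<..<a j + 2 * l j} \<subseteq> {0<..<1} - E" for j
      using inside[of j] outside[of j] range[of j] l[of j] by auto
    then show "(\<Sum>j. L j x y)
      \<le> indicator (E \<inter> {0<..<1}) x * indicator ({0<..<1} - E) y * gagliardo_kernel s x y"
      unfolding L_def by (rule suminf_indicator_mult_le[OF disj])
  qed
  also have "\<dots> \<le> gagliardo_energy s (indicator E)"
    by (rule escape_integral_le_gagliardo_energy_indicator) measurable
  finally show ?thesis .
qed

definition block_start :: "(nat \<Rightarrow> real) \<Rightarrow> nat \<Rightarrow> real" where
  "block_start l j = 2 * (\<Sum>i<j. l i)"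

definition blocks :: "(nat \<Rightarrow> real) \<Rightarrow> real set" where
  "blocks l = (\<Union>j. {block_start l j<..<block_start l j + l j})"

lemma block_start_Suc: "block_start l (Suc j) = block_start l j + 2 * l j"
  by (simp add: block_start_def algebra_simps)

lemma block_start_mono:
  assumes "\<And>j. 0 \<le> l j" "i \<le> j"
  shows "block_start l i \<le> block_start l j"
  unfolding block_start_def using assms by (intro mult_left_mono sum_mono2) auto

lemma block_start_le_suminf:
  assumes "\<And>j. 0 \<le> l j" "summable l"
  shows "block_start l j \<le> 2 * suminf l"
  unfolding block_start_def using assms by (intro mult_left_mono sum_le_suminf) auto

lemma block_end_le_block_start:
  assumes "\<And>j. 0 \<le> l j" "i < j"
  shows "block_start l i + l i \<le> block_start l j"
  using block_start_mono[of l "Suc i" j, OF assms(1)] assms(1)[of i] assms(2)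
  by (simp add: block_start_Suc)

lemma disjoint_family_blocks:
  assumes "\<And>j. 0 \<le> l j"
  shows "disjoint_family (\<lambda>j. {block_start l j<..<block_start l j + l j})"
proof -
  have "{block_start l i<..<block_start l i + l i} \<inter> {block_start l j<..<block_start l j + l j} = {}"
    if "i < j" for i j
    using block_end_le_block_start[of l i j] assms that by auto
  then show ?thesis
    unfolding disjoint_family_on_def by (metis Int_commute linorder_neqE_nat)
qed

lemma blocks_Int_gap:
  assumes "\<And>j. 0 \<le> l j"
  shows "blocks l \<inter> {block_start l j + l j<..<block_start l j + 2 * l j} = {}"
proof -
  have "{block_start l i<..<block_start l i + l i}
      \<inter> {block_start l j + l j<..<block_start l j + 2 * l j} = {}" for i
  proof (cases "i \<le> j")
    case True
    then have "block_start l i + l i \<le> block_start l j + l j"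
      using block_end_le_block_start[of l i j, OF assms] assms[of j] by (cases "i = j") auto
    then show ?thesis
      by auto
  next
    case False
    then show ?thesis
      using block_start_mono[of l "Suc j" i] assms by (auto simp: block_start_Suc)
  qed
  then show ?thesis
    unfolding blocks_def by blast
qed

lemma block_with_gap_subset:
  assumes "\<And>j. 0 \<le> l j" "summable l"
  shows "{block_start l j<..<block_start l j + 2 * l j} \<subseteq> {0<..<2 * suminf l}"
  using block_start_le_suminf[of l "Suc j"] block_start_mono[of l 0 j] assms
  by (auto simp: block_start_Suc block_start_def)

lemma blocks_subset:
  assumes "\<And>j. 0 \<le> l j" "summable l"
  shows "blocks l \<subseteq> {0<..<2 * suminf l}"
  using block_with_gap_subset[OF assms] assms(1) by (fastforce simp: blocks_def)

lemma in_Wsp_indicator_blocks_iff: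
  assumes l: "\<And>j. 0 < l j" "summable l" "2 * suminf l \<le> 1" and s: "0 < s" "s < 1/2"
  shows "in_Wsp s (indicator (blocks l)) \<longleftrightarrow> summable (\<lambda>j. l j powr (1 - 2 * s))"
proof -
  have l_nonneg: "\<And>j. 0 \<le> l j"
    using l(1) less_imp_le by blast
  have "in_Wsp s (indicator (blocks l)) \<longleftrightarrow> gagliardo_energy s (indicator (blocks l)) < \<infinity>"
    by (rule in_Wsp_indicator_open_iff) (auto simp: blocks_def)
  also have "\<dots> \<longleftrightarrow> summable (\<lambda>j. l j powr (1 - 2 * s))"
  proof
    assume "summable (\<lambda>j. l j powr (1 - 2 * s))"
    then have "(\<Sum>j. ennreal (l j powr (1 - 2 * s) / (s * (1 - 2 * s)))) < \<infinity>"
      using s by (simp add: less_top[symmetric] ennreal_suminf_neq_top summable_divide)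
    then have "2 * (\<Sum>j. ennreal (l j powr (1 - 2 * s) / (s * (1 - 2 * s)))) < \<infinity>"
      by (simp add: ennreal_mult_less_top)
    then show "gagliardo_energy s (indicator (blocks l)) < \<infinity>"
      using gagliardo_energy_indicator_Union_le[OF l(1) s] unfolding blocks_def
      by (rule le_less_trans[rotated])
  next
    assume energy_finite: "gagliardo_energy s (indicator (blocks l)) < \<infinity>"
    have "(\<Sum>j. ennreal (2 powr (-(1 + 2 * s)) * l j powr (1 - 2 * s)))
        \<le> gagliardo_energy s (indicator (blocks l))"
    proof (rule gagliardo_energy_indicator_ge[OF _ l(1) s(1) disjoint_family_blocks[OF l_nonneg]])
      show "blocks l \<in> sets borel"
        by (auto simp: blocks_def)
      show "{block_start l j<..<block_start l j + 2 * l j} \<subseteq> {0<..<1}" for j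
        using block_with_gap_subset[OF l_nonneg l(2)] l(3) by fastforce
      show "blocks l \<inter> {block_start l j + l j<..<block_start l j + 2 * l j} = {}" for j
        by (rule blocks_Int_gap[OF l_nonneg])
    qed (auto simp: blocks_def)
    with energy_finite
    have "(\<Sum>j. ennreal (2 powr (-(1 + 2 * s)) * l j powr (1 - 2 * s))) \<noteq> top"
      by (auto simp: top_unique)
    then have "summable (\<lambda>j. 2 powr (-(1 + 2 * s)) * l j powr (1 - 2 * s))"
      by (rule summable_suminf_not_top[rotated]) simp
    then show "summable (\<lambda>j. l j powr (1 - 2 * s))"
      by (simp add: summable_cmult_iff)
  qed
  finally show ?thesis .
qed

lemma power_sequence_with_critical_exponent:
  fixes s d :: real
  assumes s: "0 < s" "s < 1/2" and d: "0 < d"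
  obtains l :: "nat \<Rightarrow> real"
  where "\<And>j. 0 < l j" "summable l" "2 * suminf l = d"
    "\<And>t. summable (\<lambda>j. l j powr (1 - 2 * t)) \<longleftrightarrow> t < s"
proof -
  define p where "p = 1 / (1 - 2 * s)"
  have summable_Suc_powr: "summable (\<lambda>j. real (Suc j) powr e) \<longleftrightarrow> e < -1" for e
    using summable_Suc_iff[of "\<lambda>j. real j powr e"] summable_real_powr_iff[of e] by simp
  define w where "w j = real (Suc j) powr (-p)" for j
  have w_pos: "0 < w j" for j
    by (simp add: w_def)
  have w_summable: "summable w"
    unfolding w_def summable_Suc_powr using s by (simp add: p_def field_simps)
  define c where "c = d / (2 * suminf w)"
  have c_pos: "0 < c"
    using suminf_pos[OF w_summable w_pos] d by (simp add: c_def)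
  define l where "l j = c * w j" for j
  have "0 < l j" for j
    using c_pos w_pos by (simp add: l_def)
  moreover have "summable l"
    unfolding l_def by (intro summable_mult w_summable)
  moreover have "2 * suminf l = d"
  proof -
    have "suminf l = c * suminf w"
      unfolding l_def by (rule suminf_mult[OF w_summable])
    then show ?thesis
      using suminf_pos[OF w_summable w_pos] by (simp add: c_def)
  qed
  moreover have "summable (\<lambda>j. l j powr (1 - 2 * t)) \<longleftrightarrow> t < s" for t
  proof -
    have "l j powr (1 - 2 * t) = c powr (1 - 2 * t) * real (Suc j) powr (-p * (1 - 2 * t))" for j
      using c_pos by (simp add: l_def w_def powr_mult powr_powr)
    then have "summable (\<lambda>j. l j powr (1 - 2 * t)) \<longleftrightarrow> -p * (1 - 2 * t) < -1"
      using c_pos by (simp add: summable_cmult_iff summable_Suc_powr del: of_nat_Suc)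
    also have "\<dots> \<longleftrightarrow> t < s"
      using s by (simp add: p_def field_simps)
    finally show ?thesis .
  qed
  ultimately show ?thesis
    using that by blast
qed

lemma G_class_indicator_if_subset:
  fixes E :: "real set"
  assumes "E \<subseteq> {0<..<1 / 2 ^ n}"
  shows "G_class n d (indicator E)"
proof -
  have "real i / 2 ^ n \<notin> E" for i :: nat
  proof (cases "i = 0")
    case False
    then have "1 / 2 ^ n \<le> real i / 2 ^ n"
      by (simp add: divide_right_mono)
    then show ?thesis
      using assms by auto
  qed (use assms in auto)
  then show ?thesis
    unfolding G_class_def mdeg_le_def angle_map_def
    by (auto intro!: exI[of _ "\<lambda>_. 0"])
qed

theorem mainTheorem5:
  fixes n :: nat and s :: real
  assumes "n \<ge> 2" and "0 < s" and "s < 1/2"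
  shows "\<exists>g :: real \<Rightarrow> real.
           (\<forall>x\<in>{0..1}. g x \<in> {0..1}) \<and>
           G_class n 1 g \<and>
           (\<forall>s'. 0 < s' \<and> s' < s \<longrightarrow> in_Wsp s' g) \<and>
           \<not> in_Wsp s g"
proof -
  \<comment> \<open>The construction works on every dyadic grid.\<close>
  obtain l where l_pos: "\<And>j. 0 < l j" and l_summable: "summable l"
    and l_sum: "2 * suminf l = 1 / 2 ^ n"
    and l_critical: "\<And>t. summable (\<lambda>j. l j powr (1 - 2 * t)) \<longleftrightarrow> t < s"
    by (rule power_sequence_with_critical_exponent[OF assms(2,3), of "1 / 2 ^ n"]) auto
  have l_le: "2 * suminf l \<le> 1"
    using l_sum by simp
  have "blocks l \<subseteq> {0<..<1 / 2 ^ n}"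
    using blocks_subset[of l] l_pos l_summable l_sum by (simp add: less_imp_le)
  then have "G_class n 1 (indicator (blocks l))"
    by (rule G_class_indicator_if_subset)
  moreover have "in_Wsp t (indicator (blocks l)) \<longleftrightarrow> t < s" if "0 < t" "t \<le> s" for t
    using in_Wsp_indicator_blocks_iff[OF l_pos l_summable l_le that(1)] l_critical that assms(3)
    by simp
  ultimately show ?thesis
    using assms(2) by (intro exI[of _ "indicator (blocks l)"]) (auto simp: indicator_def)
qed

end
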